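(* The class $K^F$ is faithful: whenever $(\Gamma_1,X_1),(\Gamma_2,X_2)\in K^F$ and $\Phi\colon\Gamma_1\to\Gamma_2$ is an isomorphism of abstract groups, there exists a homeomorphism $\phi\colon X_1\to X_2$ such that $\Phi(\gamma)=\phi\circ\gamma\circ\phi^{-1}$ for every $\gamma\in\Gamma_1$.
   Context: A Boolean space is a Hausdorff space with a basis of compact open sets. For a space $X$, $\operatorname{supp}(\phi)$ is the closure of $\{x:\phi(x)\ne x\}$, and $\operatorname{Homeo}_c(X)$ is the set of homeomorphisms of $X$ whose support is compact and open. A space-group pair is $(\Gamma,X)$ with $X$ a Boolean space and $\Gamma$ a subgroup of $\operatorname{Homeo}(X)$ contained in $\operatorname{Homeo}_c(X)$. The class $K^F$ consists of all such pairs satisfying: (F1) for any $x\in X$ and clopen neighbourhood $A$ of $x$, there is $\alpha\in\Gamma\setminus\{1\}$ with $\alpha^2=1$, $x\in\operatorname{supp}(\alpha)$ and $\operatorname{supp}(\alpha)\subseteq A$; (F2) for any $\alpha\in\Gamma\setminus\{1\}$ with $\alpha^2=1$ and any non-empty clopen $A\subseteq\operatorname{supp}(\alpha)$, there is $\beta\in\Gamma\setminus\{1\}$ with $\operatorname{supp}(\beta)\subseteq A\cup\alpha(A)$ and $\alpha(x)=\beta(x)$ for all $x\in\operatorname{supp}(\beta)$; (F3) for any non-empty clopen $A\subseteq X$ there is $\alpha\in\Gamma$ with $\operatorname{supp}(\alpha)\subseteq A$ and $\alpha^2\ne1$. *)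

theory Defs
  imports "HOL-Analysis.Analysis"
begin

definition boolean_space :: "'a::topological_space itself \<Rightarrow> bool" where
  "boolean_space TYPE('a) \<longleftrightarrow>
     (\<forall>x y::'a. x \<noteq> y \<longrightarrow> (\<exists>U V. open U \<and> open V \<and> x \<in> U \<and> y \<in> V \<and> U \<inter> V = {}))
     \<and> topological_basis {B::'a set. compact B \<and> open B}"

definition supp :: "('a::topological_space \<Rightarrow> 'a) \<Rightarrow> 'a set" where
  "supp f = closure {x. f x \<noteq> x}"

definition Homeo :: "('a::topological_space \<Rightarrow> 'a) set" where
  "Homeo = {f. homeomorphism UNIV UNIV f (inv f)}"

definition Homeo_c :: "('a::topological_space \<Rightarrow> 'a) set" where
  "Homeo_c = {f \<in> Homeo. compact (supp f) \<and> open (supp f)}"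

definition clopen_set :: "'a::topological_space set \<Rightarrow> bool" where
  "clopen_set A \<longleftrightarrow> open A \<and> closed A"

definition homeo_subgroup :: "('a::topological_space \<Rightarrow> 'a) set \<Rightarrow> bool" where
  "homeo_subgroup \<Gamma> \<longleftrightarrow> \<Gamma> \<subseteq> Homeo \<and> id \<in> \<Gamma> \<and>
     (\<forall>f\<in>\<Gamma>. \<forall>g\<in>\<Gamma>. f \<circ> g \<in> \<Gamma>) \<and> (\<forall>f\<in>\<Gamma>. inv f \<in> \<Gamma>)"

definition space_group_pair :: "('a::topological_space \<Rightarrow> 'a) set \<Rightarrow> bool" where
  "space_group_pair \<Gamma> \<longleftrightarrow> boolean_space TYPE('a) \<and> homeo_subgroup \<Gamma> \<and> \<Gamma> \<subseteq> Homeo_c"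

definition class_KF :: "('a::topological_space \<Rightarrow> 'a) set \<Rightarrow> bool" where
  "class_KF \<Gamma> \<longleftrightarrow> space_group_pair \<Gamma> \<and>
    \<comment> \<open>(F1)\<close>
    (\<forall>x A. clopen_set A \<and> x \<in> A \<longrightarrow>
       (\<exists>\<alpha>\<in>\<Gamma>. \<alpha> \<noteq> id \<and> \<alpha> \<circ> \<alpha> = id \<and> x \<in> supp \<alpha> \<and> supp \<alpha> \<subseteq> A)) \<and>
    \<comment> \<open>(F2)\<close>
    (\<forall>\<alpha>\<in>\<Gamma>. \<forall>A. \<alpha> \<noteq> id \<and> \<alpha> \<circ> \<alpha> = id \<and> clopen_set A \<and> A \<noteq> {} \<and> A \<subseteq> supp \<alpha> \<longrightarrow>
       (\<exists>\<beta>\<in>\<Gamma>. \<beta> \<noteq> id \<and> supp \<beta> \<subseteq> A \<union> \<alpha> ` A \<and> (\<forall>x\<in>supp \<beta>. \<alpha> x = \<beta> x))) \<and>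
    \<comment> \<open>(F3)\<close>
    (\<forall>A. clopen_set A \<and> A \<noteq> {} \<longrightarrow> (\<exists>\<alpha>\<in>\<Gamma>. supp \<alpha> \<subseteq> A \<and> \<alpha> \<circ> \<alpha> \<noteq> id))"

definition group_iso ::
  "(('a \<Rightarrow> 'a) \<Rightarrow> ('b \<Rightarrow> 'b)) \<Rightarrow> ('a \<Rightarrow> 'a) set \<Rightarrow> ('b \<Rightarrow> 'b) set \<Rightarrow> bool" where
  "group_iso \<Phi> \<Gamma>1 \<Gamma>2 \<longleftrightarrow> bij_betw \<Phi> \<Gamma>1 \<Gamma>2 \<and>
     (\<forall>g\<in>\<Gamma>1. \<forall>h\<in>\<Gamma>1. \<Phi> (g \<circ> h) = \<Phi> g \<circ> \<Phi> h)"

end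

(*
  The proof follows Rubin's reconstruction method. For an involution a of a group in K^F, call
  an involution b a restriction of a if b agrees with a wherever b moves a point. This relation
  is expressible in the group alone: b is a restriction of a iff b is an involution and every h
  commuting with a conjugates b to an element commuting with b. The nontrivial direction uses
  (F3) to find, inside a small set displaced by b, an element acting non-involutively, and
  symmetrises it so that it commutes with a. Using (F2), disjointness of the supports of two
  involutions is in turn expressible through restrictions, so an isomorphism Phi preserves
  disjointness and hence inclusion of supports of involutions.

  A point x is sent to the common point of the supports of Phi a, a ranging over the
  involutions whose support contains x. By (F1) these supports have the finite intersection
  property, and they are compact; the intersection is a single point since, again by (F1),
  involutions with small supports separate points. The resulting map phi is continuous and
  satisfies phi o gamma = Phi gamma o phi, and the same construction for the inverse of Phi
  yields its inverse.
*)
theory Submission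
  imports Defs
begin

section \<open>Supports, restrictions and commutation\<close>

definition moved :: "('a \<Rightarrow> 'a) \<Rightarrow> 'a set" where
  "moved f = {x. f x \<noteq> x}"

lemma supp_eq_closure_moved: "supp f = closure (moved f)"
  unfolding supp_def moved_def ..

lemma moved_subset_supp: "moved f \<subseteq> supp f"
  unfolding supp_eq_closure_moved by (rule closure_subset)

lemma fixed_outside_supp: "x \<notin> supp f \<Longrightarrow> f x = x"
  using moved_subset_supp unfolding moved_def by blast

lemma moved_image: "inj f \<Longrightarrow> x \<in> moved f \<Longrightarrow> f x \<in> moved f"
  unfolding moved_def by (simp add: inj_eq)

lemma supp_eq_empty_iff: "supp f = {} \<longleftrightarrow> f = id"
  unfolding supp_eq_closure_moved moved_def by (auto simp: fun_eq_iff)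

lemma disjoint_moved_commute:
  assumes "inj f" "inj g" "moved f \<inter> moved g = {}"
  shows "f \<circ> g = g \<circ> f"
proof
  fix x
  have "f (g x) = g x" if "g x \<noteq> x"
    using assms moved_image[OF assms(2), of x] that unfolding moved_def by blast
  moreover have "g (f x) = f x" if "f x \<noteq> x"
    using assms moved_image[OF assms(1), of x] that unfolding moved_def by blast
  ultimately show "(f \<circ> g) x = (g \<circ> f) x"
    using assms(3) unfolding moved_def by (cases "f x = x"; cases "g x = x") auto
qed

definition is_restriction :: "('a \<Rightarrow> 'a) \<Rightarrow> ('a \<Rightarrow> 'a) \<Rightarrow> bool" where
  "is_restriction b a \<longleftrightarrow> b \<circ> b = id \<and> (\<forall>x. b x \<noteq> x \<longrightarrow> b x = a x)"

lemma is_restriction_fixed_iff: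
  assumes "is_restriction b a" "a \<circ> a = id"
  shows "b (a x) = a x \<longleftrightarrow> b x = x"
  using assms unfolding is_restriction_def by (metis pointfree_idE)

lemma restrictions_commute:
  assumes "is_restriction b1 a" "is_restriction b2 a" "a \<circ> a = id"
  shows "b1 \<circ> b2 = b2 \<circ> b1"
proof
  fix x
  have "b x \<noteq> x \<Longrightarrow> b x = a x" "b (a x) = a x \<longleftrightarrow> b x = x" "b (a x) \<noteq> a x \<Longrightarrow> b (a x) = x"
    if "is_restriction b a" for b
    using is_restriction_fixed_iff[OF that assms(3)] that assms(3) unfolding is_restriction_def
    by (auto simp: pointfree_idE)
  note r1 = this[OF assms(1)] and r2 = this[OF assms(2)]
  show "(b1 \<circ> b2) x = (b2 \<circ> b1) x"
    unfolding comp_apply by (cases "b1 x = x"; cases "b2 x = x") (metis r1 r2)+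
qed

lemma moved_subset_if_restriction: "is_restriction b a \<Longrightarrow> moved b \<subseteq> moved a"
  unfolding is_restriction_def moved_def by auto

lemma is_restriction_conjugate:
  assumes "bij h" "h \<circ> a = a \<circ> h" "is_restriction b a"
  shows "is_restriction (h \<circ> b \<circ> inv h) a"
  unfolding is_restriction_def
proof (intro conjI allI impI)
  have bb: "b (b x) = x" for x
    using assms(3) unfolding is_restriction_def by (simp add: pointfree_idE)
  have hh: "inv h (h x) = x" "h (inv h y) = y" for x y
    using assms(1) by (simp_all add: bij_is_inj bij_is_surj surj_f_inv_f)
  show "(h \<circ> b \<circ> inv h) \<circ> (h \<circ> b \<circ> inv h) = id"
    using bb hh by (simp add: fun_eq_iff)
  fix y assume "(h \<circ> b \<circ> inv h) y \<noteq> y"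
  then have "b (inv h y) = a (inv h y)"
    using hh(2) assms(3) unfolding is_restriction_def by (metis comp_apply)
  then show "(h \<circ> b \<circ> inv h) y = a y"
    using hh(2) assms(2) by (metis comp_apply)
qed

lemma conjugate_not_commute:
  assumes "inj h" "b \<circ> b = id" "h (b w) = b w" "h (b (h w)) = b (h w)" "h (h w) \<noteq> w"
  shows "(h \<circ> b \<circ> inv h) \<circ> b \<noteq> b \<circ> (h \<circ> b \<circ> inv h)"
proof
  assume "(h \<circ> b \<circ> inv h) \<circ> b = b \<circ> (h \<circ> b \<circ> inv h)"
  then have "h (b (inv h (b (h w)))) = b (h (b (inv h (h w))))"
    by (metis comp_apply)
  then show False
    using assms by (simp add: pointfree_idE inv_f_f inv_f_eq)
qed

lemma symmetrized_commute:
  assumes "a \<circ> a = id" "g \<circ> (a \<circ> g \<circ> a) = (a \<circ> g \<circ> a) \<circ> g"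
  shows "(g \<circ> (a \<circ> g \<circ> a)) \<circ> a = a \<circ> (g \<circ> (a \<circ> g \<circ> a))"
  using assms by (simp add: comp_assoc)

lemma supp_conjugate:
  assumes "homeomorphism UNIV UNIV g g'"
  shows "supp (g' \<circ> a \<circ> g) = g -` supp a"
proof -
  have g'g: "g' (g x) = x" and gg': "g (g' y) = y" for x y
    using assms by (simp_all add: homeomorphism_apply1 homeomorphism_apply2)
  have preimage: "g -` S = g' ` S" for S
  proof
    show "g -` S \<subseteq> g' ` S" using g'g by (auto intro: image_eqI[where x = "g _"])
    show "g' ` S \<subseteq> g -` S" using gg' by auto
  qed
  have "moved (g' \<circ> a \<circ> g) = g -` moved a"
    unfolding moved_def using g'g by auto (metis gg')
  moreover have "closure (g' ` S) = g' ` closure S" for S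
  proof (rule closure_bij_homeomorphic_image_eq)
    show "homeomorphism UNIV UNIV g' g" using assms by (rule homeomorphism_symD)
    then show "continuous_on UNIV g'" "continuous_on UNIV g"
      by (simp_all add: homeomorphism_cont1 homeomorphism_cont2)
    show "bij_betw g' UNIV UNIV" using g'g gg' by (intro o_bij[of g]) auto
  qed (simp_all add: g'g)
  ultimately show ?thesis
    unfolding supp_eq_closure_moved preimage by simp
qed

text \<open>A group-theoretic substitute for \<^const>\<open>is_restriction\<close>: it only uses composition
  and inverses in \<open>G\<close>, so it is transported by abstract isomorphisms, and for involutions of a
  group in \<open>K\<^sup>F\<close> it is equivalent to \<^const>\<open>is_restriction\<close>.\<close>
definition alg_restriction :: "('a \<Rightarrow> 'a) set \<Rightarrow> ('a \<Rightarrow> 'a) \<Rightarrow> ('a \<Rightarrow> 'a) \<Rightarrow> bool" where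
  "alg_restriction G b a \<longleftrightarrow> b \<circ> b = id \<and>
     (\<forall>h\<in>G. h \<circ> a = a \<circ> h \<longrightarrow> (h \<circ> b \<circ> inv h) \<circ> b = b \<circ> (h \<circ> b \<circ> inv h))"

definition alg_disjoint :: "('a \<Rightarrow> 'a) set \<Rightarrow> ('a \<Rightarrow> 'a) \<Rightarrow> ('a \<Rightarrow> 'a) \<Rightarrow> bool" where
  "alg_disjoint G a c \<longleftrightarrow> (\<forall>b\<in>G. alg_restriction G b a \<longrightarrow> b \<circ> c = c \<circ> b) \<and>
     (\<forall>b\<in>G. alg_restriction G b a \<and> alg_restriction G b c \<longrightarrow> b = id)"

lemma not_alg_restriction:
  assumes "h \<in> G" "inj h" "h \<circ> a = a \<circ> h" "b \<circ> b = id"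
    and "h (b w) = b w" "h (b (h w)) = b (h w)" "h (h w) \<noteq> w"
  shows "\<not> alg_restriction G b a"
proof
  assume "alg_restriction G b a"
  then have "(h \<circ> b \<circ> inv h) \<circ> b = b \<circ> (h \<circ> b \<circ> inv h)"
    using assms(1,3) unfolding alg_restriction_def by blast
  with conjugate_not_commute[OF assms(2,4-7)] show False ..
qed

section \<open>Space-group pairs\<close>

locale space_group =
  fixes G :: "('a::topological_space \<Rightarrow> 'a) set"
  assumes space_group_pair: "space_group_pair G"
begin

lemma hausdorff:
  "(x::'a) \<noteq> y \<Longrightarrow> \<exists>U V. open U \<and> open V \<and> x \<in> U \<and> y \<in> V \<and> U \<inter> V = {}"
  using space_group_pair unfolding space_group_pair_def boolean_space_def by (elim conjE) blast

lemma compact_imp_closed: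
  assumes "compact (K::'a set)" shows "closed K"
proof -
  have "Hausdorff_space (euclidean :: 'a topology)"
    unfolding Hausdorff_space_def disjnt_def using hausdorff by (metis open_openin)
  then show ?thesis
    using compactin_imp_closedin[of euclidean K] assms by simp
qed

lemma clopen_nbhd:
  assumes "open U" "x \<in> U"
  shows "\<exists>W. clopen_set W \<and> x \<in> W \<and> W \<subseteq> (U::'a set)"
proof -
  have "topological_basis {B::'a set. compact B \<and> open B}"
    using space_group_pair unfolding space_group_pair_def boolean_space_def by (elim conjE)
  then obtain B where "B \<in> {B. compact B \<and> open B}" "x \<in> B" "B \<subseteq> U"
    using assms by (rule topological_basisE)
  then show ?thesis using compact_imp_closed unfolding clopen_set_def by blast
qed

lemma separating_clopen:
  assumes "x \<noteq> (y::'a)"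
  shows "\<exists>A. clopen_set A \<and> x \<in> A \<and> y \<notin> A"
proof -
  obtain U V where "open U" "open V" "x \<in> U" "y \<in> V" "U \<inter> V = {}"
    using hausdorff[OF assms] by blast
  then show ?thesis using clopen_nbhd[of U x] by blast
qed

lemma homeo_subgroup: "homeo_subgroup G"
  using space_group_pair unfolding space_group_pair_def by (elim conjE)

lemma id_mem: "id \<in> G"
  using homeo_subgroup unfolding homeo_subgroup_def by (elim conjE) blast

lemma comp_mem: "f \<in> G \<Longrightarrow> g \<in> G \<Longrightarrow> f \<circ> g \<in> G"
  using homeo_subgroup unfolding homeo_subgroup_def by (elim conjE) blast

lemma inv_mem: "f \<in> G \<Longrightarrow> inv f \<in> G"
  using homeo_subgroup unfolding homeo_subgroup_def by (elim conjE) blast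

lemma homeomorphism_mem: "f \<in> G \<Longrightarrow> homeomorphism UNIV UNIV f (inv f)"
  using homeo_subgroup unfolding homeo_subgroup_def Homeo_def by blast

lemma continuous_mem: "f \<in> G \<Longrightarrow> continuous_on UNIV f"
  using homeomorphism_mem homeomorphism_cont1 by blast

lemma inv_f_f_mem: "f \<in> G \<Longrightarrow> inv f (f x) = x"
  using homeomorphism_mem homeomorphism_apply1 by blast

lemma f_inv_f_mem: "f \<in> G \<Longrightarrow> f (inv f y) = y"
  using homeomorphism_mem homeomorphism_apply2 by blast

lemma bij_mem: "f \<in> G \<Longrightarrow> bij f"
  by (metis inv_f_f_mem f_inv_f_mem bij_betw_byWitness top_greatest)

lemma inj_mem: "f \<in> G \<Longrightarrow> inj f"
  by (simp add: bij_mem bij_is_inj)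

lemma open_supp: "f \<in> G \<Longrightarrow> open (supp f)"
  and compact_supp: "f \<in> G \<Longrightarrow> compact (supp f)"
  using space_group_pair unfolding space_group_pair_def Homeo_c_def by (elim conjE; blast)+

lemma clopen_Compl_supp: "f \<in> G \<Longrightarrow> clopen_set (- supp f)"
  using open_supp[of f] unfolding clopen_set_def supp_def by auto

lemma displaced_nbhd:
  assumes "open N" "y \<in> N" "f \<in> G" "f y \<noteq> y"
  shows "\<exists>N'. open N' \<and> y \<in> N' \<and> N' \<subseteq> N \<and> (\<forall>z\<in>N'. f z \<notin> N')"
proof -
  obtain U V where UV: "open U" "open V" "y \<in> U" "f y \<in> V" "U \<inter> V = {}"
    using hausdorff[OF assms(4)[symmetric]] by blast
  have "open (f -` V)"
    using open_vimage[OF UV(2) continuous_mem[OF assms(3)]] .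
  with UV assms(1,2) show ?thesis
    by (intro exI[of _ "N \<inter> U \<inter> f -` V"]) auto
qed

lemma displaced_nbhd_finite:
  assumes "finite F" "F \<subseteq> G" "\<forall>f\<in>F. f y \<noteq> y" "open N" "y \<in> N"
  shows "\<exists>W. open W \<and> y \<in> W \<and> W \<subseteq> N \<and> (\<forall>f\<in>F. \<forall>z\<in>W. f z \<notin> W)"
  using assms
proof (induction F rule: finite_induct)
  case empty
  then show ?case by blast
next
  case (insert f F)
  then obtain W where W: "open W" "y \<in> W" "W \<subseteq> N" "\<forall>g\<in>F. \<forall>z\<in>W. g z \<notin> W"
    by auto
  moreover have "f \<in> G" "f y \<noteq> y" using insert.prems by auto
  then obtain W' where "open W'" "y \<in> W'" "W' \<subseteq> W" "\<forall>z\<in>W'. f z \<notin> W'"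
    using displaced_nbhd[OF W(1,2)] by blast
  ultimately show ?case by (intro exI[of _ W']) blast
qed

lemma open_moved:
  assumes "f \<in> G" shows "open (moved f)"
  unfolding open_subopen[of "moved f"]
proof
  fix x assume "x \<in> moved f"
  then obtain N where "open N" "x \<in> N" "\<forall>z\<in>N. f z \<notin> N"
    using displaced_nbhd[OF open_UNIV UNIV_I assms, of x] unfolding moved_def by auto
  then show "\<exists>T. open T \<and> x \<in> T \<and> T \<subseteq> moved f"
    unfolding moved_def by force
qed

lemma moved_Int_nonempty:
  assumes "f \<in> G" "g \<in> G" "supp f \<inter> supp g \<noteq> {}"
  shows "moved f \<inter> moved g \<noteq> {}"
  using assms open_Int_closure_eq_empty[OF open_supp[OF assms(1)], of "moved g"]
    open_Int_closure_eq_empty[OF open_moved[OF assms(2)], of "moved f"]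
  unfolding supp_eq_closure_moved by blast

lemma alg_restriction_if_restriction:
  assumes "a \<circ> a = id" "is_restriction b a"
  shows "alg_restriction G b a"
  unfolding alg_restriction_def
proof (intro conjI ballI impI)
  show "b \<circ> b = id" using assms(2) unfolding is_restriction_def by blast
  fix h assume "h \<in> G" "h \<circ> a = a \<circ> h"
  then have "is_restriction (h \<circ> b \<circ> inv h) a"
    using is_restriction_conjugate bij_mem assms(2) by blast
  then show "(h \<circ> b \<circ> inv h) \<circ> b = b \<circ> (h \<circ> b \<circ> inv h)"
    using restrictions_commute assms by blast
qed

end

section \<open>Restriction and disjointness in \<open>K\<^sup>F\<close>\<close>

locale KF_group = space_group +
  assumes F1: "\<And>x A. clopen_set A \<Longrightarrow> x \<in> A \<Longrightarrow>
      \<exists>\<alpha>\<in>G. \<alpha> \<noteq> id \<and> \<alpha> \<circ> \<alpha> = id \<and> x \<in> supp \<alpha> \<and> supp \<alpha> \<subseteq> A"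
    and F2: "\<And>\<alpha> A. \<alpha> \<in> G \<Longrightarrow> \<alpha> \<noteq> id \<Longrightarrow> \<alpha> \<circ> \<alpha> = id \<Longrightarrow> clopen_set A \<Longrightarrow> A \<noteq> {} \<Longrightarrow>
      A \<subseteq> supp \<alpha> \<Longrightarrow> \<exists>\<beta>\<in>G. \<beta> \<noteq> id \<and> supp \<beta> \<subseteq> A \<union> \<alpha> ` A \<and> (\<forall>x\<in>supp \<beta>. \<alpha> x = \<beta> x)"
    and F3: "\<And>A. clopen_set A \<Longrightarrow> A \<noteq> {} \<Longrightarrow> \<exists>\<alpha>\<in>G. supp \<alpha> \<subseteq> A \<and> \<alpha> \<circ> \<alpha> \<noteq> id"

lemma KF_groupI:
  assumes "class_KF G" shows "KF_group G"
  using assms unfolding class_KF_def by unfold_locales auto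

context KF_group
begin

lemma exists_restriction_within:
  assumes "a \<in> G" "a \<circ> a = id" "clopen_set A" "A \<noteq> {}" "A \<subseteq> supp a"
  shows "\<exists>b\<in>G. is_restriction b a \<and> moved b \<subseteq> A \<union> a ` A \<and> (\<exists>z\<in>A. b z \<noteq> z)"
proof -
  have "a \<noteq> id" using assms(4,5) supp_eq_empty_iff by blast
  then obtain b where b: "b \<in> G" "b \<noteq> id" "supp b \<subseteq> A \<union> a ` A" "\<forall>x\<in>supp b. a x = b x"
    using F2 assms by blast
  have aa: "a (a x) = x" for x using assms(2) by (rule pointfree_idE)
  have agree: "b x = a x" if "b x \<noteq> x" for x
  proof -
    have "x \<in> supp b" using that moved_subset_supp unfolding moved_def by blast
    then show ?thesis using b(4) by simp
  qed
  have bb: "b (b x) = x" for x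
  proof (cases "b x = x")
    case False
    then have "b (b x) \<noteq> b x" using moved_image[OF inj_mem[OF b(1)]] unfolding moved_def by blast
    then show ?thesis using agree False aa by metis
  qed simp
  then have restr: "is_restriction b a"
    unfolding is_restriction_def using agree by (simp add: fun_eq_iff)
  have moved_b: "moved b \<subseteq> A \<union> a ` A" using b(3) moved_subset_supp by blast
  obtain z where z: "b z \<noteq> z" using b(2) by (auto simp: fun_eq_iff)
  have "\<exists>z\<in>A. b z \<noteq> z"
  proof (cases "z \<in> A")
    case False
    then obtain w where "w \<in> A" "z = a w" using z moved_b unfolding moved_def by blast
    then have "b z = w" "b w = z" using agree z aa bb by metis+
    then show ?thesis using \<open>w \<in> A\<close> z by metis
  qed (use z in blast)
  then show ?thesis using b(1) restr moved_b by blast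
qed

lemma exists_non_involution_within:
  assumes "open U" "U \<noteq> {}"
  shows "\<exists>g\<in>G. supp g \<subseteq> U \<and> (\<exists>w\<in>U. g w \<in> U \<and> g (g w) \<noteq> w)"
proof -
  obtain x where "x \<in> U" using assms(2) by blast
  then obtain W where W: "clopen_set W" "x \<in> W" "W \<subseteq> U" using clopen_nbhd assms(1) by blast
  then obtain g where g: "g \<in> G" "supp g \<subseteq> W" "g \<circ> g \<noteq> id" using F3 by blast
  then obtain w where w: "g (g w) \<noteq> w" by (auto simp: fun_eq_iff)
  then have "w \<in> moved g" "g w \<in> moved g"
    using moved_image[OF inj_mem[OF g(1)]] unfolding moved_def by force+
  then show ?thesis using g W(3) w moved_subset_supp by blast
qed

lemma exists_commuting_non_involution:
  assumes "a \<in> G" "a \<circ> a = id" "open W" "W \<noteq> {}" "\<forall>z\<in>W. a z \<notin> W"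
  shows "\<exists>h\<in>G. h \<circ> a = a \<circ> h \<and> (\<forall>z. z \<notin> W \<longrightarrow> a z \<notin> W \<longrightarrow> h z = z) \<and>
           (\<exists>w\<in>W. h w \<in> W \<and> h (h w) \<noteq> w)"
proof -
  obtain g w where g: "g \<in> G" "supp g \<subseteq> W" and w: "w \<in> W" "g w \<in> W" "g (g w) \<noteq> w"
    using exists_non_involution_within[OF assms(3,4)] by blast
  have aa: "a (a x) = x" for x using assms(2) by (rule pointfree_idE)
  have fixed: "g z = z" if "z \<notin> W" for z
    using that g(2) by (intro fixed_outside_supp) blast
  define g' where "g' = a \<circ> g \<circ> a"
  have g'G: "g' \<in> G" unfolding g'_def using assms(1) g(1) by (intro comp_mem)
  have "moved g' \<subseteq> - W"
    unfolding moved_def g'_def using assms(5) fixed aa by auto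
  moreover have "moved g \<subseteq> W" using g(2) moved_subset_supp by blast
  ultimately have "moved g \<inter> moved g' = {}" by blast
  then have "g \<circ> g' = g' \<circ> g"
    by (rule disjoint_moved_commute[OF inj_mem[OF g(1)] inj_mem[OF g'G]])
  then have "(g \<circ> g') \<circ> a = a \<circ> (g \<circ> g')"
    unfolding g'_def by (rule symmetrized_commute[OF assms(2)])
  moreover have "g \<circ> g' \<in> G" using g(1) g'G by (rule comp_mem)
  moreover have "\<forall>z. z \<notin> W \<longrightarrow> a z \<notin> W \<longrightarrow> (g \<circ> g') z = z"
    unfolding g'_def using fixed aa by simp
  moreover have "(g \<circ> g') z = g z" if "z \<in> W" for z
    unfolding g'_def using that assms(5) fixed aa by simp
  ultimately show ?thesis
    using w by (intro bexI[of _ "g \<circ> g'"] conjI bexI[of _ w]) auto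
qed

lemma alg_restriction_moved_subset_supp:
  assumes "a \<in> G" "b \<in> G" "alg_restriction G b a" "b y \<noteq> y"
  shows "y \<in> supp a"
proof (rule ccontr)
  assume "y \<notin> supp a"
  moreover have "open (- supp a)" unfolding supp_def by (intro open_Compl closed_closure)
  ultimately obtain N where N: "open N" "y \<in> N" "N \<subseteq> - supp a" "\<forall>z\<in>N. b z \<notin> N"
    using displaced_nbhd[OF _ _ assms(2,4)] by (metis ComplI)
  then obtain g w where g: "g \<in> G" "supp g \<subseteq> N" and w: "w \<in> N" "g w \<in> N" "g (g w) \<noteq> w"
    using exists_non_involution_within[OF N(1)] by (metis empty_iff)
  have "moved g \<inter> moved a = {}"
    using g(2) N(3) moved_subset_supp[of g] moved_subset_supp[of a] by blast
  then have commute: "g \<circ> a = a \<circ> g"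
    by (rule disjoint_moved_commute[OF inj_mem[OF g(1)] inj_mem[OF assms(1)]])
  have fixes_b: "g (b z) = b z" if "z \<in> N" for z
    using that N(4) g(2) fixed_outside_supp[of "b z" g] by blast
  have "b \<circ> b = id" using assms(3) unfolding alg_restriction_def by (rule conjunct1)
  from not_alg_restriction[OF g(1) inj_mem[OF g(1)] commute this
      fixes_b[OF w(1)] fixes_b[OF w(2)] w(3)]
  show False using assms(3) by contradiction
qed

lemma alg_restriction_agrees:
  assumes "a \<in> G" "a \<circ> a = id" "b \<in> G" "alg_restriction G b a" "b y \<noteq> y" "y \<in> supp a"
  shows "b y = a y"
proof (rule ccontr)
  assume "b y \<noteq> a y"
  have aa: "a (a x) = x" for x using assms(2) by (rule pointfree_idE)
  have abG: "a \<circ> b \<in> G" using assms(1,3) by (rule comp_mem)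
  have "a (b y) \<noteq> y" using \<open>b y \<noteq> a y\<close> aa by metis
  then have "y \<in> moved b \<inter> moved (a \<circ> b) \<inter> closure (moved a)"
    using assms(5,6) unfolding moved_def supp_eq_closure_moved by simp
  moreover have "open (moved b \<inter> moved (a \<circ> b))"
    using open_moved[OF assms(3)] open_moved[OF abG] by (rule open_Int)
  ultimately obtain y' where "y' \<in> moved b \<inter> moved (a \<circ> b) \<inter> moved a"
    using open_Int_closure_eq_empty by blast
  then have "\<forall>f\<in>{a, b, a \<circ> b}. f y' \<noteq> y'" unfolding moved_def by simp
  then obtain W where W: "open W" "y' \<in> W" "\<forall>f\<in>{a, b, a \<circ> b}. \<forall>z\<in>W. f z \<notin> W"
    using displaced_nbhd_finite[of "{a, b, a \<circ> b}" y' UNIV] assms(1,3) abG by auto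
  then have displaced: "a z \<notin> W" "b z \<notin> W" "a (b z) \<notin> W" if "z \<in> W" for z
    using that by auto
  then obtain h w where h: "h \<in> G" "h \<circ> a = a \<circ> h" "\<forall>z. z \<notin> W \<longrightarrow> a z \<notin> W \<longrightarrow> h z = z"
    and w: "w \<in> W" "h w \<in> W" "h (h w) \<noteq> w"
    using exists_commuting_non_involution[OF assms(1,2) W(1)] W(2) by blast
  have fixes_b: "h (b z) = b z" if "z \<in> W" for z
    using h(3) displaced that by blast
  have "b \<circ> b = id" using assms(4) unfolding alg_restriction_def by (rule conjunct1)
  from not_alg_restriction[OF h(1) inj_mem[OF h(1)] h(2) this
      fixes_b[OF w(1)] fixes_b[OF w(2)] w(3)]
  show False using assms(4) by contradiction
qed

lemma alg_restriction_iff_restriction: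
  assumes "a \<in> G" "a \<circ> a = id" "b \<in> G"
  shows "alg_restriction G b a \<longleftrightarrow> is_restriction b a"
proof
  assume alg: "alg_restriction G b a"
  then have "b y = a y" if "b y \<noteq> y" for y
    using alg_restriction_moved_subset_supp alg_restriction_agrees assms that by blast
  with alg show "is_restriction b a"
    unfolding is_restriction_def alg_restriction_def by blast
qed (use alg_restriction_if_restriction assms(2) in blast)

lemma alg_disjoint_if_disjoint_supp:
  assumes "a \<in> G" "a \<circ> a = id" "c \<in> G" "supp a \<inter> supp c = {}"
  shows "alg_disjoint G a c"
  unfolding alg_disjoint_def
proof (intro conjI ballI impI)
  have moved_a: "moved b \<subseteq> moved a" if "b \<in> G" "alg_restriction G b a" for b
    using that alg_restriction_iff_restriction[OF assms(1,2)] moved_subset_if_restriction by blast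
  fix b assume b: "b \<in> G" "alg_restriction G b a"
  then have "moved b \<inter> moved c = {}"
    using moved_a assms(4) moved_subset_supp[of a] moved_subset_supp[of c] by blast
  then show "b \<circ> c = c \<circ> b" by (rule disjoint_moved_commute[OF inj_mem[OF b(1)] inj_mem[OF assms(3)]])
next
  fix b assume b: "b \<in> G" "alg_restriction G b a \<and> alg_restriction G b c"
  then have "moved b \<subseteq> supp a \<inter> supp c"
    using alg_restriction_moved_subset_supp assms(1,3) unfolding moved_def by blast
  then show "b = id" using assms(4) unfolding moved_def by (auto simp: fun_eq_iff)
qed

lemma alg_disjoint_agrees:
  assumes "a \<in> G" "a \<circ> a = id" "c \<in> G" "c \<circ> c = id" "alg_disjoint G a c"
    and "a y \<noteq> y" "c y \<noteq> y"
  shows "c y = a y"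
proof (rule ccontr)
  assume "c y \<noteq> a y"
  have aa: "a (a x) = x" for x using assms(2) by (rule pointfree_idE)
  have cc: "c (c x) = x" for x using assms(4) by (rule pointfree_idE)
  have acG: "a \<circ> c \<in> G" using assms(1,3) by (rule comp_mem)
  have "a (c y) \<noteq> y" using \<open>c y \<noteq> a y\<close> aa by metis
  then have "\<forall>f\<in>{c, a \<circ> c}. f y \<noteq> y" using assms(7) by simp
  moreover have "y \<in> moved a" using assms(6) unfolding moved_def by simp
  ultimately obtain W where W: "open W" "y \<in> W" "W \<subseteq> moved a" "\<forall>f\<in>{c, a \<circ> c}. \<forall>z\<in>W. f z \<notin> W"
    using displaced_nbhd_finite[of "{c, a \<circ> c}" y "moved a"] assms(3) acG open_moved[OF assms(1)]
    by auto
  then obtain A where A: "clopen_set A" "y \<in> A" "A \<subseteq> W" using clopen_nbhd by blast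
  then have "A \<subseteq> supp a" using W(3) moved_subset_supp by blast
  then obtain b z where b: "b \<in> G" "is_restriction b a" "moved b \<subseteq> A \<union> a ` A"
    and z: "z \<in> A" "b z \<noteq> z"
    using exists_restriction_within[OF assms(1,2) A(1)] A(2) by blast
  \<comment> \<open>\<open>b\<close> commutes with \<open>c\<close>, but \<open>c\<close> maps the point \<open>z\<close> moved by \<open>b\<close>
    to a point fixed by \<open>b\<close>.\<close>
  have "b \<circ> c = c \<circ> b"
    using assms(5) alg_restriction_if_restriction[OF assms(2) b(2)] b(1)
    unfolding alg_disjoint_def by blast
  have "c z \<notin> A \<union> a ` A"
  proof
    assume "c z \<in> A \<union> a ` A"
    moreover have "c z \<notin> A" "a (c z) \<notin> A" using W(4) A(3) z(1) by auto
    ultimately show False using aa by force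
  qed
  then have "b (c z) = c z" using b(3) unfolding moved_def by blast
  then have "b z = z" using \<open>b \<circ> c = c \<circ> b\<close> cc by (metis comp_apply)
  then show False using z(2) by contradiction
qed

lemma disjoint_supp_if_alg_disjoint:
  assumes "a \<in> G" "a \<circ> a = id" "c \<in> G" "c \<circ> c = id" "alg_disjoint G a c"
  shows "supp a \<inter> supp c = {}"
proof (rule ccontr)
  assume "supp a \<inter> supp c \<noteq> {}"
  then obtain y where "y \<in> moved a \<inter> moved c" using moved_Int_nonempty assms(1,3) by blast
  moreover have "open (moved a \<inter> moved c)"
    using open_moved[OF assms(1)] open_moved[OF assms(3)] by (rule open_Int)
  ultimately obtain A where A: "clopen_set A" "y \<in> A" "A \<subseteq> moved a \<inter> moved c"
    using clopen_nbhd by blast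
  have aa: "a (a x) = x" for x using assms(2) by (rule pointfree_idE)
  have cc: "c (c x) = x" for x using assms(4) by (rule pointfree_idE)
  have agree: "c x = a x" if "x \<in> A" for x
    using alg_disjoint_agrees[OF assms] A(3) that unfolding moved_def by blast
  have "A \<subseteq> supp a" using A(3) moved_subset_supp by blast
  then obtain b z where b: "b \<in> G" "is_restriction b a" "moved b \<subseteq> A \<union> a ` A"
    and z: "b z \<noteq> z"
    using exists_restriction_within[OF assms(1,2) A(1)] A(2) by blast
  have "b x = c x" if "b x \<noteq> x" for x
  proof -
    have "b x = a x" using b(2) that unfolding is_restriction_def by blast
    moreover have "x \<in> A \<union> a ` A" using b(3) that unfolding moved_def by blast
    ultimately show ?thesis using agree aa cc by (metis UnE imageE)
  qed
  then have "is_restriction b c" using b(2) unfolding is_restriction_def by blast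
  then have "b = id"
    using assms(5) b(1) alg_restriction_if_restriction[OF assms(2) b(2)]
      alg_restriction_if_restriction[OF assms(4)]
    unfolding alg_disjoint_def by blast
  then show False using z by simp
qed

lemma alg_disjoint_iff_disjoint_supp:
  assumes "a \<in> G" "a \<circ> a = id" "c \<in> G" "c \<circ> c = id"
  shows "alg_disjoint G a c \<longleftrightarrow> supp a \<inter> supp c = {}"
  using alg_disjoint_if_disjoint_supp[OF assms(1-3)] disjoint_supp_if_alg_disjoint[OF assms]
  by blast

end

section \<open>Transport along an isomorphism\<close>

lemma group_iso_inv_into:
  assumes iso: "group_iso \<Phi> G1 G2" and closed: "\<forall>f\<in>G1. \<forall>g\<in>G1. f \<circ> g \<in> G1"
  shows "group_iso (inv_into G1 \<Phi>) G2 G1"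
  unfolding group_iso_def
proof
  have bij: "bij_betw \<Phi> G1 G2" using iso unfolding group_iso_def by blast
  then show "bij_betw (inv_into G1 \<Phi>) G2 G1" by (rule bij_betw_inv_into)
  show "\<forall>g\<in>G2. \<forall>h\<in>G2. inv_into G1 \<Phi> (g \<circ> h) = inv_into G1 \<Phi> g \<circ> inv_into G1 \<Phi> h"
  proof (intro ballI)
    fix g h assume "g \<in> G2" "h \<in> G2"
    then have "inv_into G1 \<Phi> g \<in> G1" "inv_into G1 \<Phi> h \<in> G1"
      "\<Phi> (inv_into G1 \<Phi> g) = g" "\<Phi> (inv_into G1 \<Phi> h) = h"
      using bij by (auto simp: bij_betw_def inv_into_into f_inv_into_f)
    then have "\<Phi> (inv_into G1 \<Phi> g \<circ> inv_into G1 \<Phi> h) = g \<circ> h"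
      using iso unfolding group_iso_def by metis
    then show "inv_into G1 \<Phi> (g \<circ> h) = inv_into G1 \<Phi> g \<circ> inv_into G1 \<Phi> h"
      using bij closed \<open>inv_into G1 \<Phi> g \<in> G1\<close> \<open>inv_into G1 \<Phi> h \<in> G1\<close>
      by (metis bij_betw_imp_inj_on inv_into_f_f)
  qed
qed

locale KF_iso = G1: KF_group G1 + G2: KF_group G2
  for G1 :: "('a::topological_space \<Rightarrow> 'a) set"
    and G2 :: "('b::topological_space \<Rightarrow> 'b) set" +
  fixes Phi :: "('a \<Rightarrow> 'a) \<Rightarrow> ('b \<Rightarrow> 'b)"
  assumes group_iso: "group_iso Phi G1 G2"
begin

lemma bij_betw_Phi: "bij_betw Phi G1 G2"
  using group_iso unfolding group_iso_def by blast

lemma Phi_mem: "f \<in> G1 \<Longrightarrow> Phi f \<in> G2"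
  using bij_betw_Phi by (rule bij_betw_apply)

lemma Phi_comp: "f \<in> G1 \<Longrightarrow> g \<in> G1 \<Longrightarrow> Phi (f \<circ> g) = Phi f \<circ> Phi g"
  using group_iso unfolding group_iso_def by blast

lemma Phi_eq_iff: "f \<in> G1 \<Longrightarrow> g \<in> G1 \<Longrightarrow> Phi f = Phi g \<longleftrightarrow> f = g"
  using bij_betw_Phi unfolding bij_betw_def inj_on_def by blast

lemma surj_Phi: "h \<in> G2 \<Longrightarrow> \<exists>f\<in>G1. h = Phi f"
  using bij_betw_Phi unfolding bij_betw_def by blast

lemma ball_G2_Phi_iff: "(\<forall>h\<in>G2. P h) \<longleftrightarrow> (\<forall>f\<in>G1. P (Phi f))"
  using Phi_mem surj_Phi by metis

lemma Phi_id: "Phi id = id"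
proof -
  have "Phi id \<circ> Phi id = Phi id \<circ> id"
    using Phi_comp[OF G1.id_mem G1.id_mem] by simp
  then show ?thesis
    using G2.inj_mem[OF Phi_mem[OF G1.id_mem]] by (simp add: fun_eq_iff inj_eq)
qed

lemma Phi_inv:
  assumes "f \<in> G1" shows "Phi (inv f) = inv (Phi f)"
proof -
  have "f \<circ> inv f = id" "inv f \<circ> f = id"
    using G1.f_inv_f_mem[OF assms] G1.inv_f_f_mem[OF assms] by (simp_all add: fun_eq_iff)
  then have "Phi f \<circ> Phi (inv f) = id" "Phi (inv f) \<circ> Phi f = id"
    using Phi_comp[OF assms G1.inv_mem[OF assms]] Phi_comp[OF G1.inv_mem[OF assms] assms] Phi_id
    by simp_all
  then show ?thesis by (rule inv_unique_comp[symmetric])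
qed

lemma Phi_commute_iff:
  "f \<in> G1 \<Longrightarrow> g \<in> G1 \<Longrightarrow> Phi f \<circ> Phi g = Phi g \<circ> Phi f \<longleftrightarrow> f \<circ> g = g \<circ> f"
  by (simp add: Phi_comp[symmetric] Phi_eq_iff G1.comp_mem)

lemma Phi_eq_id_iff: "f \<in> G1 \<Longrightarrow> Phi f = id \<longleftrightarrow> f = id"
  using Phi_eq_iff[OF _ G1.id_mem] Phi_id by simp

lemma Phi_involution_iff: "f \<in> G1 \<Longrightarrow> Phi f \<circ> Phi f = id \<longleftrightarrow> f \<circ> f = id"
  by (simp add: Phi_comp[symmetric] Phi_eq_id_iff G1.comp_mem)

lemma Phi_conjugate:
  "h \<in> G1 \<Longrightarrow> b \<in> G1 \<Longrightarrow> Phi (h \<circ> b \<circ> inv h) = Phi h \<circ> Phi b \<circ> inv (Phi h)"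
  by (simp add: Phi_comp Phi_inv G1.comp_mem G1.inv_mem)

lemma alg_restriction_Phi_iff:
  assumes "a \<in> G1" "b \<in> G1"
  shows "alg_restriction G2 (Phi b) (Phi a) \<longleftrightarrow> alg_restriction G1 b a"
  unfolding alg_restriction_def ball_G2_Phi_iff
  using assms by (simp add: Phi_involution_iff Phi_commute_iff Phi_conjugate[symmetric]
      G1.comp_mem G1.inv_mem cong: ball_cong)

lemma alg_disjoint_Phi_iff:
  assumes "a \<in> G1" "c \<in> G1"
  shows "alg_disjoint G2 (Phi a) (Phi c) \<longleftrightarrow> alg_disjoint G1 a c"
  unfolding alg_disjoint_def ball_G2_Phi_iff
  using assms by (simp add: alg_restriction_Phi_iff Phi_commute_iff Phi_eq_id_iff cong: ball_cong)

lemma disjoint_supp_Phi_iff: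
  assumes "a \<in> G1" "a \<circ> a = id" "c \<in> G1" "c \<circ> c = id"
  shows "supp (Phi a) \<inter> supp (Phi c) = {} \<longleftrightarrow> supp a \<inter> supp c = {}"
  using assms G1.alg_disjoint_iff_disjoint_supp G2.alg_disjoint_iff_disjoint_supp
    alg_disjoint_Phi_iff Phi_mem Phi_involution_iff by metis

lemma supp_Phi_mono:
  assumes "a \<in> G1" "a \<circ> a = id" "b \<in> G1" "b \<circ> b = id" "supp b \<subseteq> supp a"
  shows "supp (Phi b) \<subseteq> supp (Phi a)"
proof
  fix y assume y: "y \<in> supp (Phi b)"
  show "y \<in> supp (Phi a)"
  proof (rule ccontr)
    assume "y \<notin> supp (Phi a)"
    then obtain d' where d': "d' \<in> G2" "d' \<circ> d' = id" "y \<in> supp d'" "supp d' \<subseteq> - supp (Phi a)"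
      using G2.F1[OF G2.clopen_Compl_supp[OF Phi_mem[OF assms(1)]]] by blast
    then obtain d where d: "d \<in> G1" "d' = Phi d" using surj_Phi by blast
    then have dd: "d \<circ> d = id" using d'(2) Phi_involution_iff by blast
    have "supp (Phi d) \<inter> supp (Phi a) = {}" using d'(4) d(2) by blast
    then have "supp d \<inter> supp b = {}"
      using disjoint_supp_Phi_iff[OF d(1) dd assms(1,2)] assms(5) by blast
    then have "supp (Phi d) \<inter> supp (Phi b) = {}"
      using disjoint_supp_Phi_iff[OF d(1) dd assms(3,4)] by blast
    then show False using y d'(3) d(2) by blast
  qed
qed

definition corresp :: "'a \<Rightarrow> 'b \<Rightarrow> bool" where
  "corresp x y \<longleftrightarrow> (\<forall>a\<in>G1. a \<circ> a = id \<longrightarrow> x \<in> supp a \<longrightarrow> y \<in> supp (Phi a))"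

lemma Inter_supp_Phi_nonempty:
  assumes "finite S" "S \<noteq> {}" "\<And>a. a \<in> S \<Longrightarrow> a \<in> G1 \<and> a \<circ> a = id \<and> x \<in> supp a"
  shows "(\<Inter>a\<in>S. supp (Phi a)) \<noteq> {}"
proof -
  have "open (\<Inter>a\<in>S. supp a)"
    using assms(1) by (rule open_INT) (use assms(3) G1.open_supp in blast)
  moreover have "closed (\<Inter>a\<in>S. supp a)"
    by (rule closed_INT) (simp add: supp_def)
  moreover have "x \<in> (\<Inter>a\<in>S. supp a)" using assms(3) by blast
  ultimately obtain b where b: "b \<in> G1" "b \<noteq> id" "b \<circ> b = id" "supp b \<subseteq> (\<Inter>a\<in>S. supp a)"
    using G1.F1[of "\<Inter>a\<in>S. supp a" x] unfolding clopen_set_def by blast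
  have "supp (Phi b) \<subseteq> (\<Inter>a\<in>S. supp (Phi a))"
  proof (rule INT_greatest)
    fix a assume "a \<in> S"
    then show "supp (Phi b) \<subseteq> supp (Phi a)"
      using supp_Phi_mono[of a b] assms(3) b(1,3,4) by blast
  qed
  moreover have "supp (Phi b) \<noteq> {}" using b(1,2) by (simp add: Phi_eq_id_iff supp_eq_empty_iff)
  ultimately show ?thesis by blast
qed

lemma corresp_exists: "\<exists>y. corresp x y"
proof -
  have "clopen_set UNIV" unfolding clopen_set_def by simp
  then obtain a0 where a0: "a0 \<in> G1" "a0 \<circ> a0 = id" "x \<in> supp a0"
    using G1.F1[OF _ UNIV_I] by blast
  define S where "S = {a\<in>G1. a \<circ> a = id \<and> x \<in> supp a}"
  have "supp (Phi a0) \<inter> (\<Inter>a\<in>S. supp (Phi a)) \<noteq> {}"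
  proof (rule compact_imp_fip_image)
    show "compact (supp (Phi a0))" using Phi_mem[OF a0(1)] by (rule G2.compact_supp)
    show "closed (supp (Phi a))" for a unfolding supp_def by simp
    fix S' assume "finite S'" "S' \<subseteq> S"
    then have "(\<Inter>a\<in>insert a0 S'. supp (Phi a)) \<noteq> {}"
      using a0 unfolding S_def by (intro Inter_supp_Phi_nonempty) auto
    then show "supp (Phi a0) \<inter> (\<Inter>a\<in>S'. supp (Phi a)) \<noteq> {}" by simp
  qed
  then obtain y where "y \<in> (\<Inter>a\<in>S. supp (Phi a))" by blast
  then have "corresp x y" unfolding corresp_def S_def by blast
  then show ?thesis ..
qed

lemma corresp_supp_iff:
  assumes "corresp x y" "a \<in> G1" "a \<circ> a = id"
  shows "y \<in> supp (Phi a) \<longleftrightarrow> x \<in> supp a"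
proof
  assume y: "y \<in> supp (Phi a)"
  show "x \<in> supp a"
  proof (rule ccontr)
    assume "x \<notin> supp a"
    then obtain d where d: "d \<in> G1" "d \<circ> d = id" "x \<in> supp d" "supp d \<subseteq> - supp a"
      using G1.F1[OF G1.clopen_Compl_supp[OF assms(2)]] by blast
    then have "supp (Phi d) \<inter> supp (Phi a) = {}"
      using disjoint_supp_Phi_iff[OF d(1,2) assms(2,3)] by blast
    moreover have "y \<in> supp (Phi d)" using assms(1) d unfolding corresp_def by blast
    ultimately show False using y by blast
  qed
next
  assume "x \<in> supp a"
  then show "y \<in> supp (Phi a)" using assms unfolding corresp_def by blast
qed

lemma corresp_unique:
  assumes "corresp x y" "corresp x y'"
  shows "y = y'"
proof (rule ccontr)
  assume "y \<noteq> y'"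
  then obtain A where A: "clopen_set A" "y \<in> A" "y' \<notin> A" using G2.separating_clopen by blast
  then obtain d' where d': "d' \<in> G2" "d' \<circ> d' = id" "y \<in> supp d'" "supp d' \<subseteq> A"
    using G2.F1 by blast
  then obtain d where d: "d \<in> G1" "d' = Phi d" using surj_Phi by blast
  then have "d \<circ> d = id" using d'(2) Phi_involution_iff by blast
  then have "y' \<in> supp d'"
    using corresp_supp_iff[OF assms(1) d(1)] corresp_supp_iff[OF assms(2) d(1)] d'(3) d(2) by blast
  then show False using d'(4) A(3) by blast
qed

definition point_map :: "'a \<Rightarrow> 'b" where
  "point_map x = (THE y. corresp x y)"

lemma corresp_point_map: "corresp x (point_map x)"
proof -
  obtain y where "corresp x y" using corresp_exists ..
  then show ?thesis unfolding point_map_def by (rule theI) (use \<open>corresp x y\<close> corresp_unique in blast)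
qed

lemma point_map_eqI: "corresp x y \<Longrightarrow> point_map x = y"
  using corresp_point_map corresp_unique by blast

lemma supp_Phi_point_map_iff:
  "a \<in> G1 \<Longrightarrow> a \<circ> a = id \<Longrightarrow> point_map x \<in> supp (Phi a) \<longleftrightarrow> x \<in> supp a"
  using corresp_supp_iff[OF corresp_point_map] .

lemma continuous_point_map: "continuous_on UNIV point_map"
  unfolding continuous_on_open_vimage[OF open_UNIV]
proof (intro allI impI)
  fix B :: "'b set" assume "open B"
  have "\<exists>T. open T \<and> x \<in> T \<and> T \<subseteq> point_map -` B" if x: "point_map x \<in> B" for x
  proof -
    obtain A where A: "clopen_set A" "point_map x \<in> A" "A \<subseteq> B"
      using G2.clopen_nbhd[OF \<open>open B\<close> x] by blast
    then obtain d' where d': "d' \<in> G2" "d' \<circ> d' = id" "point_map x \<in> supp d'" "supp d' \<subseteq> A"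
      using G2.F1 by blast
    then obtain d where d: "d \<in> G1" "d' = Phi d" using surj_Phi by blast
    then have dd: "d \<circ> d = id" using d'(2) Phi_involution_iff by blast
    have "supp d \<subseteq> point_map -` B"
      using supp_Phi_point_map_iff[OF d(1) dd] d(2) d'(4) A(3) by blast
    moreover have "x \<in> supp d" using supp_Phi_point_map_iff[OF d(1) dd] d(2) d'(3) by blast
    ultimately show ?thesis using G1.open_supp[OF d(1)] by blast
  qed
  then show "open (point_map -` B \<inter> UNIV)" by (simp add: open_subopen[of "point_map -` B"])
qed

lemma point_map_equivariant:
  assumes "g \<in> G1"
  shows "point_map (g x) = Phi g (point_map x)"
proof (rule point_map_eqI)
  show "corresp (g x) (Phi g (point_map x))"
    unfolding corresp_def
  proof (intro ballI impI)
    fix a assume a: "a \<in> G1" "a \<circ> a = id" "g x \<in> supp a"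
    define a' where "a' = inv g \<circ> a \<circ> g"
    have a'G: "a' \<in> G1" unfolding a'_def using assms a(1) by (intro G1.comp_mem G1.inv_mem)
    have "a (a z) = z" "inv g (g z) = z" "g (inv g z) = z" for z
      using a(2) G1.inv_f_f_mem[OF assms] G1.f_inv_f_mem[OF assms] by (simp_all add: pointfree_idE)
    then have "a' \<circ> a' = id" unfolding a'_def by (simp add: fun_eq_iff)
    moreover have "x \<in> supp a'"
      unfolding a'_def supp_conjugate[OF G1.homeomorphism_mem[OF assms]] using a(3) by simp
    ultimately have "point_map x \<in> supp (Phi a')" using supp_Phi_point_map_iff a'G by blast
    moreover have "Phi a' = inv (Phi g) \<circ> Phi a \<circ> Phi g"
    proof -
      have "Phi a' = Phi (inv g \<circ> a) \<circ> Phi g"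
        unfolding a'_def using assms a(1) by (intro Phi_comp G1.comp_mem G1.inv_mem)
      also have "\<dots> = inv (Phi g) \<circ> Phi a \<circ> Phi g"
        using Phi_comp[OF G1.inv_mem[OF assms] a(1)] Phi_inv[OF assms] by simp
      finally show ?thesis .
    qed
    ultimately show "Phi g (point_map x) \<in> supp (Phi a)"
      using supp_conjugate[OF G2.homeomorphism_mem[OF Phi_mem[OF assms]]] by simp
  qed
qed

lemma point_map_inverse:
  assumes "KF_iso G2 G1 Psi" "\<And>f. f \<in> G1 \<Longrightarrow> Psi (Phi f) = f"
  shows "point_map (KF_iso.point_map G2 Psi y) = y"
proof -
  interpret inverse: KF_iso G2 G1 Psi by (fact assms(1))
  show ?thesis
  proof (rule point_map_eqI)
    show "corresp (inverse.point_map y) y"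
      unfolding corresp_def
    proof (intro ballI impI)
      fix a assume a: "a \<in> G1" "a \<circ> a = id" "inverse.point_map y \<in> supp a"
      have "Phi a \<circ> Phi a = id" using a(1,2) by (simp add: Phi_involution_iff)
      with Phi_mem[OF a(1)]
      have "inverse.point_map y \<in> supp (Psi (Phi a)) \<longleftrightarrow> y \<in> supp (Phi a)"
        by (rule inverse.supp_Phi_point_map_iff)
      then show "y \<in> supp (Phi a)" using a(3) assms(2)[OF a(1)] by simp
    qed
  qed
qed

end

theorem theorem6p6:
  fixes \<Gamma>1 :: "('a::topological_space \<Rightarrow> 'a) set"
    and \<Gamma>2 :: "('b::topological_space \<Rightarrow> 'b) set"
    and \<Phi> :: "('a \<Rightarrow> 'a) \<Rightarrow> ('b \<Rightarrow> 'b)"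
  assumes "class_KF \<Gamma>1" and "class_KF \<Gamma>2" and "group_iso \<Phi> \<Gamma>1 \<Gamma>2"
  shows "\<exists>\<phi> :: 'a \<Rightarrow> 'b. homeomorphism UNIV UNIV \<phi> (inv \<phi>) \<and>
           (\<forall>\<gamma>\<in>\<Gamma>1. \<Phi> \<gamma> = \<phi> \<circ> \<gamma> \<circ> inv \<phi>)"
proof -
  have iso: "KF_iso \<Gamma>1 \<Gamma>2 \<Phi>"
    using assms by (simp add: KF_iso_def KF_iso_axioms_def KF_groupI)
  interpret F: KF_iso \<Gamma>1 \<Gamma>2 \<Phi> by (fact iso)
  define \<Psi> where "\<Psi> = inv_into \<Gamma>1 \<Phi>"
  have "group_iso \<Psi> \<Gamma>2 \<Gamma>1"
    unfolding \<Psi>_def using assms(3) F.G1.comp_mem by (intro group_iso_inv_into) blast+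
  then have iso': "KF_iso \<Gamma>2 \<Gamma>1 \<Psi>"
    using assms by (simp add: KF_iso_def KF_iso_axioms_def KF_groupI)
  interpret B: KF_iso \<Gamma>2 \<Gamma>1 \<Psi> by (fact iso')
  have "\<Psi> (\<Phi> f) = f" if "f \<in> \<Gamma>1" for f
    unfolding \<Psi>_def using F.bij_betw_Phi that by (simp add: bij_betw_def)
  then have FB: "F.point_map (B.point_map y) = y" for y
    using F.point_map_inverse[OF iso'] by blast
  have "\<Phi> (\<Psi> g) = g" if "g \<in> \<Gamma>2" for g
    unfolding \<Psi>_def using F.bij_betw_Phi that by (simp add: bij_betw_def f_inv_into_f)
  then have BF: "B.point_map (F.point_map x) = x" for x
    using B.point_map_inverse[OF iso] by blast
  have inv: "inv F.point_map = B.point_map"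
    using FB BF by (intro inv_unique_comp) (simp_all add: fun_eq_iff)
  have "homeomorphism UNIV UNIV F.point_map B.point_map"
    using F.continuous_point_map B.continuous_point_map FB BF by (intro homeomorphismI) auto
  moreover have "\<Phi> \<gamma> = F.point_map \<circ> \<gamma> \<circ> B.point_map" if "\<gamma> \<in> \<Gamma>1" for \<gamma>
    using F.point_map_equivariant[OF that] FB by (simp add: fun_eq_iff)
  ultimately show ?thesis by (intro exI[of _ F.point_map]) (simp add: inv)
qed

end
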